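(* Let $p\neq 2$ be a prime and $G=Z_{p^{\lambda_1}}\times\cdots\times Z_{p^{\lambda_n}}$ with $0<\lambda_1<\cdots<\lambda_n$. For a canonical tuple $\mathbf a$, the subgroup $R(\mathbf a)$ is a join-irreducible element of $\mathrm{Char}(G)$ if and only if $\mathbf a$ has precisely one nondegenerate coordinate.
   Context: $\mathrm{Char}(G)$ is the lattice of characteristic subgroups of $G$; an element of a finite lattice is join-irreducible if it is not the bottom element and is not the join of two elements each strictly below it. Set $\lambda_0=0$ and $a_0=0$. Tuples are ordered componentwise; for $\mathbf 0\le\mathbf a\le(\lambda_1,\dots,\lambda_n)$, $T(\mathbf a)$ is the set of $(g_1,\dots,g_n)\in G$ with $|g_i|=p^{a_i}$, and $R(\mathbf a)=\bigcup_{\mathbf b\le\mathbf a}T(\mathbf b)$. $\mathbf a$ is canonical if (I) $a_i\ge a_{i-1}$ for $i\in\{2,\dots,n\}$ and (II) $a_{i+1}-a_i\le\lambda_{i+1}-\lambda_i$ for $i\in\{1,\dots,n-1\}$; then $R(\mathbf a)$ is characteristic. A canonical $\mathbf a$ is degenerate at coordinate $i$ if $a_i=a_{i-1}$, or ($i\le n-1$ and) $a_{i+1}-a_i=\lambda_{i+1}-\lambda_i$; otherwise $i$ is nondegenerate. *)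

theory Defs
  imports "HOL-Algebra.Algebra"
begin

text \<open>Convention lambda_0 = 0, a_0 = 0: coordinate 0 of any index function is read as 0.\<close>
definition ext0 :: "(nat \<Rightarrow> nat) \<Rightarrow> nat \<Rightarrow> nat" where
  "ext0 f i = (if i = 0 then 0 else f i)"

definition Gp :: "nat \<Rightarrow> (nat \<Rightarrow> nat) \<Rightarrow> nat \<Rightarrow> (nat \<Rightarrow> int) monoid" where
  "Gp p lam n = product_group {1..n} (\<lambda>i. integer_mod_group (p ^ lam i))"

definition Tset :: "nat \<Rightarrow> (nat \<Rightarrow> nat) \<Rightarrow> nat \<Rightarrow> (nat \<Rightarrow> nat) \<Rightarrow> (nat \<Rightarrow> int) set" where
  "Tset p lam n a = {g \<in> carrier (Gp p lam n).
      \<forall>i\<in>{1..n}. group.ord (integer_mod_group (p ^ lam i)) (g i) = p ^ a i}"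

definition Rset :: "nat \<Rightarrow> (nat \<Rightarrow> nat) \<Rightarrow> nat \<Rightarrow> (nat \<Rightarrow> nat) \<Rightarrow> (nat \<Rightarrow> int) set" where
  "Rset p lam n a = (\<Union>b \<in> {b. \<forall>i\<in>{1..n}. b i \<le> a i}. Tset p lam n b)"

definition canonical :: "(nat \<Rightarrow> nat) \<Rightarrow> nat \<Rightarrow> (nat \<Rightarrow> nat) \<Rightarrow> bool" where
  "canonical lam n a \<longleftrightarrow>
     (\<forall>i\<in>{1..n}. a i \<le> lam i) \<and>
     (\<forall>i\<in>{2..n}. a i \<ge> a (i - 1)) \<and>
     (\<forall>i\<in>{1..n-1}. int (a (i + 1)) - int (a i) \<le> int (lam (i + 1)) - int (lam i))"

definition degenerate_at :: "(nat \<Rightarrow> nat) \<Rightarrow> nat \<Rightarrow> (nat \<Rightarrow> nat) \<Rightarrow> nat \<Rightarrow> bool" where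
  "degenerate_at lam n a i \<longleftrightarrow>
     ext0 a i = ext0 a (i - 1) \<or>
     (i \<le> n - 1 \<and> int (a (i + 1)) - int (a i) = int (lam (i + 1)) - int (lam i))"

definition nondegenerate_at :: "(nat \<Rightarrow> nat) \<Rightarrow> nat \<Rightarrow> (nat \<Rightarrow> nat) \<Rightarrow> nat \<Rightarrow> bool" where
  "nondegenerate_at lam n a i \<longleftrightarrow> i \<in> {1..n} \<and> \<not> degenerate_at lam n a i"

definition char_subgroups :: "('a, 'b) monoid_scheme \<Rightarrow> 'a set set" where
  "char_subgroups G = {H. subgroup H G \<and> (\<forall>f \<in> iso G G. f ` H = H)}"

definition is_join_in :: "'a set set \<Rightarrow> 'a set \<Rightarrow> 'a set \<Rightarrow> 'a set \<Rightarrow> bool" where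
  "is_join_in L y z x \<longleftrightarrow> x \<in> L \<and> y \<subseteq> x \<and> z \<subseteq> x \<and>
     (\<forall>w\<in>L. y \<subseteq> w \<and> z \<subseteq> w \<longrightarrow> x \<subseteq> w)"

definition join_irreducible_in :: "'a set set \<Rightarrow> 'a set \<Rightarrow> bool" where
  "join_irreducible_in L x \<longleftrightarrow> x \<in> L \<and> \<not> (\<forall>y\<in>L. x \<subseteq> y) \<and>
     \<not> (\<exists>y\<in>L. \<exists>z\<in>L. y \<subset> x \<and> z \<subset> x \<and> is_join_in L y z x)"

end

theory Submission
  imports Defs
begin

text \<open>
  For canonical a, R(a) is the set of tuples g with p ^ (lam i - a i) dividing g i. It is
  characteristic because it is the intersection over i of the endomorphism-invariant sets
  Omega_{p ^ a i}(G) G ^ (p ^ (lam i - a i)); conditions (I) and (II) are what puts R(a) inside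
  each of them. Lowering a nondegenerate coordinate i by one keeps a canonical and gives a
  characteristic subgroup R(a - e_i) of R(a) missing p ^ (lam i - a i) e_i.

  If no coordinate is nondegenerate, then a = 0 and R(a) is the bottom element; if i and j are,
  R(a) is the join of R(a - e_i) and R(a - e_j). If i is the only one, every characteristic
  subgroup H of R(a) not inside R(a - e_i) contains p ^ (lam i - a i) e_i: the automorphism
  doubling coordinate i (an automorphism as p is odd) isolates coordinate i of an element of H,
  and a multiple of it is that generator. The transvections x_j := x_j + x_i carry it to
  generators of all coordinates of R(a), so H = R(a), and R(a - e_i) is the unique maximal
  characteristic subgroup below R(a).
\<close>

section \<open>Characteristic subgroups\<close>

definition omega_times_powers :: "('a, 'b) monoid_scheme \<Rightarrow> nat \<Rightarrow> nat \<Rightarrow> 'a set" where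
  "omega_times_powers G k m =
     {u \<otimes>\<^bsub>G\<^esub> w [^]\<^bsub>G\<^esub> m | u w.
        u \<in> carrier G \<and> w \<in> carrier G \<and> u [^]\<^bsub>G\<^esub> k = \<one>\<^bsub>G\<^esub>}"

lemma (in group) hom_image_omega_times_powers:
  assumes "f \<in> hom G G"
  shows "f ` omega_times_powers G k m \<subseteq> omega_times_powers G k m"
proof
  interpret h: group_hom G G f
    using assms by (simp add: group_hom_def group_hom_axioms_def is_group)
  fix y assume "y \<in> f ` omega_times_powers G k m"
  then obtain u w where u: "u \<in> carrier G" and w: "w \<in> carrier G"
    and torsion: "u [^] k = \<one>" and y: "y = f (u \<otimes> w [^] m)"
    unfolding omega_times_powers_def by blast
  have "y = f u \<otimes> f w [^] m"
    using y u w by (simp add: h.hom_nat_pow)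
  moreover have "f u [^] k = \<one>"
    using u torsion by (metis h.hom_nat_pow h.hom_one)
  moreover have "f u \<in> carrier G" "f w \<in> carrier G"
    using u w by simp_all
  ultimately show "y \<in> omega_times_powers G k m"
    unfolding omega_times_powers_def by fast
qed

lemma (in group) subgroup_nat_pow_closed:
  assumes "subgroup H G" "x \<in> H"
  shows "x [^] (m::nat) \<in> H"
  using subgroup_int_pow_closed[OF assms, of "int m"] assms
  by (simp add: int_pow_int)

lemma (in group) char_subgroupI:
  assumes "finite (carrier G)" "subgroup H G" "\<And>f. f \<in> hom G G \<Longrightarrow> f ` H \<subseteq> H"
  shows "H \<in> char_subgroups G"
  unfolding char_subgroups_def
proof (intro CollectI conjI ballI)
  fix f assume f: "f \<in> iso G G"
  have H: "H \<subseteq> carrier G" using assms(2) by (rule subgroup.subset)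
  have "inj_on f (carrier G)"
    using f by (simp add: iso_def bij_betw_def)
  then have "inj_on f H"
    using H by (rule inj_on_subset)
  moreover have "finite H"
    using assms(1) H by (rule finite_subset[rotated])
  moreover have "f ` H \<subseteq> H"
    using f assms(3) by (simp add: iso_def)
  ultimately show "f ` H = H"
    by (simp add: endo_inj_surj)
qed (rule assms(2))

lemma (in group) trivial_char_subgroup: "{\<one>} \<in> char_subgroups G"
  unfolding char_subgroups_def
proof (intro CollectI conjI ballI)
  fix f assume "f \<in> iso G G"
  then have "f \<one> = \<one>" using hom_one[OF _ is_group is_group] by (simp add: iso_def)
  then show "f ` {\<one>} = {\<one>}" by simp
qed (rule triv_subgroup)

lemma char_subgroups_subgroup: "H \<in> char_subgroups G \<Longrightarrow> subgroup H G"
  unfolding char_subgroups_def by blast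

lemma (in group) char_subgroups_iso_quotient_closed:
  assumes "H \<in> char_subgroups G" "f \<in> iso G G" "x \<in> H"
  shows "f x \<otimes> inv x \<in> H"
proof -
  have "f x \<in> H" using assms unfolding char_subgroups_def by blast
  moreover have "subgroup H G" using assms(1) by (rule char_subgroups_subgroup)
  ultimately show ?thesis using assms(3) subgroup.m_closed subgroup.m_inv_closed by metis
qed

lemma join_irreducible_inI_unique_maximal:
  assumes "x \<in> L" "b \<in> L" "\<not> x \<subseteq> b" "m \<in> L" "\<not> x \<subseteq> m"
    and below: "\<And>y. y \<in> L \<Longrightarrow> y \<subset> x \<Longrightarrow> y \<subseteq> m"
  shows "join_irreducible_in L x"
proof -
  have "\<not> is_join_in L y z x" if "y \<in> L" "z \<in> L" "y \<subset> x" "z \<subset> x" for y z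
    using below[OF that(1,3)] below[OF that(2,4)] assms(4,5) unfolding is_join_in_def by blast
  then show ?thesis
    using assms(1-3) unfolding join_irreducible_in_def by blast
qed

section \<open>Canonical tuples\<close>

locale increasing_exponents =
  fixes n :: nat and lam :: "nat \<Rightarrow> nat"
  assumes lam_step: "\<forall>i\<in>{1..<n}. lam i < lam (i + 1)"
begin

lemma lam_mono: "1 \<le> i \<Longrightarrow> i \<le> j \<Longrightarrow> j \<le> n \<Longrightarrow> lam i \<le> lam j"
proof (induction j)
  case (Suc j)
  show ?case
  proof (cases "i = Suc j")
    case False
    then have "lam i \<le> lam j" using Suc by simp
    moreover have "lam j < lam (Suc j)" using lam_step Suc False by auto
    ultimately show ?thesis by simp
  qed simp
qed simp

lemma canonical_le: "canonical lam n a \<Longrightarrow> i \<in> {1..n} \<Longrightarrow> a i \<le> lam i"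
  unfolding canonical_def by blast

lemma canonical_mono:
  assumes "canonical lam n a" "1 \<le> j" "j \<le> k" "k \<le> n"
  shows "a j \<le> a k \<and> int (a k) - int (a j) \<le> int (lam k) - int (lam j)"
  using assms(3,4)
proof (induction k)
  case (Suc k)
  show ?case
  proof (cases "j = Suc k")
    case False
    then have jk: "j \<le> k" using Suc by simp
    have "Suc k \<in> {2..n}" using jk assms(2) Suc(3) by auto
    then have "a (Suc k - 1) \<le> a (Suc k)" using assms(1) unfolding canonical_def by blast
    moreover have "int (a (k + 1)) - int (a k) \<le> int (lam (k + 1)) - int (lam k)"
      using assms(1,2) Suc(3) jk unfolding canonical_def by auto
    ultimately show ?thesis using Suc jk by simp
  qed simp
qed (use assms in simp)

lemma nondegenerate_pos:
  assumes "canonical lam n a" "nondegenerate_at lam n a i"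
  shows "a i \<ge> 1"
proof -
  have i: "i \<in> {1..n}" and jump: "ext0 a i \<noteq> ext0 a (i - 1)"
    using assms(2) unfolding nondegenerate_at_def degenerate_at_def by auto
  then have "i \<noteq> 1 \<Longrightarrow> a (i - 1) \<le> a i"
    using assms(1) unfolding canonical_def by force
  then show ?thesis using i jump by (cases "i = 1") (auto simp: ext0_def)
qed

lemma canonical_lower_nondegenerate:
  assumes can: "canonical lam n a" and nd: "nondegenerate_at lam n a i"
  shows "canonical lam n (a(i := a i - 1))"
proof -
  have i: "i \<in> {1..n}" and jump: "ext0 a i \<noteq> ext0 a (i - 1)"
    and slack: "\<not> (i \<le> n - 1 \<and> int (a (i + 1)) - int (a i) = int (lam (i + 1)) - int (lam i))"
    using nd unfolding nondegenerate_at_def degenerate_at_def by auto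
  have pos: "a i \<ge> 1" using nondegenerate_pos[OF can nd] .
  have c1: "\<forall>k\<in>{1..n}. a k \<le> lam k" and c2: "\<forall>k\<in>{2..n}. a (k - 1) \<le> a k"
    and c3: "\<forall>k\<in>{1..n-1}. int (a (k + 1)) - int (a k) \<le> int (lam (k + 1)) - int (lam k)"
    using can unfolding canonical_def by auto
  have gt: "i \<ge> 2 \<Longrightarrow> a (i - 1) < a i" using c2 i jump by (force simp: ext0_def)
  show ?thesis unfolding canonical_def
  proof (intro conjI ballI)
    fix k assume "k \<in> {1..n}"
    then have "a k \<le> lam k" using c1 by blast
    then show "(a(i := a i - 1)) k \<le> lam k" by auto
  next
    fix k assume k: "k \<in> {2..n}"
    then have "a (k - 1) \<le> a k" using c2 by blast
    then show "(a(i := a i - 1)) (k - 1) \<le> (a(i := a i - 1)) k"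
      using k gt by (cases "k = i"; cases "k - 1 = i"; auto)
  next
    fix k assume k: "k \<in> {1..n-1}"
    have "int (a (k + 1)) - int (a k) \<le> int (lam (k + 1)) - int (lam k)" using c3 k by blast
    moreover have "k = i \<Longrightarrow> int (a (k + 1)) - int (a k) \<noteq> int (lam (k + 1)) - int (lam k)"
      using slack k by auto
    ultimately show "int ((a(i := a i - 1)) (k + 1)) - int ((a(i := a i - 1)) k)
        \<le> int (lam (k + 1)) - int (lam k)"
      using pos by (cases "k = i"; cases "k + 1 = i"; auto)
  qed
qed

text \<open>Downward induction from n: where a (j + 1) = a j, degeneracy at j cannot come from the
  second alternative, as lam j < lam (j + 1).\<close>

lemma degenerate_above_imp_flat:
  assumes deg: "\<And>j. i < j \<Longrightarrow> j \<le> n \<Longrightarrow> degenerate_at lam n a j"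
  shows "i < j \<Longrightarrow> j \<le> n \<Longrightarrow> ext0 a j = ext0 a (j - 1)"
proof (induction "n - j" arbitrary: j)
  case 0
  then have "j = n" "n \<ge> 1" by simp_all
  then show ?case using deg[of j] 0 unfolding degenerate_at_def by auto
next
  case (Suc d)
  then have jn: "j < n" by simp
  have "ext0 a (j + 1) = ext0 a j" using Suc(1)[of "j + 1"] Suc(2-4) by simp
  then have flat: "a (j + 1) = a j" using Suc(3) by (simp add: ext0_def)
  have "lam j < lam (j + 1)" using lam_step Suc(3) jn by auto
  then show ?case using deg[of j] Suc(3,4) flat unfolding degenerate_at_def by auto
qed

lemma all_degenerate_imp_zero:
  assumes deg: "\<And>j. j \<in> {1..n} \<Longrightarrow> degenerate_at lam n a j" and j: "j \<in> {1..n}"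
  shows "a j = 0"
proof -
  have deg': "\<And>j. 0 < j \<Longrightarrow> j \<le> n \<Longrightarrow> degenerate_at lam n a j" using deg by simp
  have zero: "ext0 a j = 0" if "j \<le> n" for j
    using that
  proof (induction j)
    case (Suc j)
    then show ?case using degenerate_above_imp_flat[of 0 a "Suc j", OF deg'] by simp
  qed (simp add: ext0_def)
  show ?thesis using zero[of j] j by (simp add: ext0_def)
qed

lemma degenerate_above_imp_const:
  assumes deg: "\<And>j. i < j \<Longrightarrow> j \<le> n \<Longrightarrow> degenerate_at lam n a j" and "1 \<le> i"
  shows "i \<le> j \<Longrightarrow> j \<le> n \<Longrightarrow> a j = a i"
proof (induction j)
  case (Suc j)
  show ?case
  proof (cases "i = Suc j")
    case False
    then have ij: "i \<le> j" using Suc(2) by simp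
    have "ext0 a (Suc j) = ext0 a (Suc j - 1)"
      using degenerate_above_imp_flat[of i a "Suc j", OF deg] ij Suc(3) by simp
    then have "a (Suc j) = a j" using ij assms(2) by (simp add: ext0_def)
    then show ?thesis using Suc ij by simp
  qed simp
qed simp

lemma degenerate_below_flat_imp_zero:
  assumes deg: "\<And>k. 1 \<le> k \<Longrightarrow> k < i \<Longrightarrow> degenerate_at lam n a k" and "i \<le> n"
  shows "1 \<le> j \<Longrightarrow> j < i \<Longrightarrow> ext0 a j = ext0 a (j - 1) \<Longrightarrow> a j = 0"
proof (induction j)
  case (Suc j)
  show ?case
  proof (cases "j = 0")
    case True then show ?thesis using Suc by (simp add: ext0_def)
  next
    case False
    have "degenerate_at lam n a j" using deg[of j] False Suc(3) by simp
    moreover have "lam j < lam (j + 1)" using lam_step False Suc(3) assms(2) by auto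
    moreover have flat: "a (Suc j) = a j" using Suc(4) False by (simp add: ext0_def)
    ultimately have "ext0 a j = ext0 a (j - 1)" unfolding degenerate_at_def by auto
    then have "a j = 0" using Suc(1) False Suc(3) by simp
    then show ?thesis using flat by simp
  qed
qed simp

text \<open>Below i, a coordinate j either lies in a flat run of zeros or has
  a (j + 1) - a j = lam (j + 1) - lam j, by degeneracy.\<close>

lemma degenerate_below_imp_height_bound:
  assumes deg: "\<And>k. 1 \<le> k \<Longrightarrow> k < i \<Longrightarrow> degenerate_at lam n a k" and "i \<le> n"
  shows "1 \<le> j \<Longrightarrow> j \<le> i \<Longrightarrow> a j = 0 \<or> int (a j) + int (lam i) - int (lam j) \<le> int (a i)"
proof (induction "i - j" arbitrary: j)
  case (Suc d)
  then have ji: "j < i" by simp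
  show ?case
  proof (cases "ext0 a j = ext0 a (j - 1)")
    case True
    then show ?thesis using degenerate_below_flat_imp_zero[OF deg assms(2)] Suc(3) ji by blast
  next
    case False
    then have step: "int (a (j + 1)) - int (a j) = int (lam (j + 1)) - int (lam j)"
      using deg[of j] Suc(3) ji unfolding degenerate_at_def by auto
    moreover have "lam j < lam (j + 1)" using lam_step Suc(3) ji assms(2) by auto
    ultimately have "a (j + 1) \<noteq> 0" by linarith
    moreover have "i - (j + 1) = d" using Suc(2) by simp
    ultimately have "int (a (j + 1)) + int (lam i) - int (lam (j + 1)) \<le> int (a i)"
      using Suc(1)[of "j + 1"] ji by simp
    then show ?thesis using step by linarith
  qed
qed simp

end

section \<open>The characteristic subgroups R(a)\<close>

lemma eq_if_dvd_diff_in_range: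
  fixes x y M :: int
  assumes "0 \<le> x" "x < M" "0 \<le> y" "y < M" "M dvd x - y"
  shows "x = y"
  using assms by (metis mod_eq_dvd_iff mod_pos_pos_trivial)

locale prime_power_product = increasing_exponents +
  fixes p :: nat
  assumes prime: "Factorial_Ring.prime p"
begin

abbreviation "G \<equiv> Gp p lam n"
abbreviation "I \<equiv> {1..n}"
abbreviation "P i \<equiv> int p ^ lam i"

lemma p_gt1: "p > 1"
  using prime prime_gt_1_nat by blast

lemma group_G: "group G"
  unfolding Gp_def by (rule product_group) simp

lemma finite_carrier_G: "finite (carrier G)"
  unfolding Gp_def using p_gt1 by (auto intro!: finite_PiE simp: carrier_integer_mod_group)

lemma in_carrier_G:
  "x \<in> carrier G \<longleftrightarrow> (\<forall>i\<in>I. 0 \<le> x i \<and> x i < P i) \<and> (\<forall>i. i \<notin> I \<longrightarrow> x i = undefined)"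
  unfolding Gp_def using p_gt1 by (auto simp: carrier_integer_mod_group PiE_iff extensional_def)

lemma mult_G: "x \<otimes>\<^bsub>G\<^esub> y = (\<lambda>i\<in>I. (x i + y i) mod P i)"
  unfolding Gp_def by simp

lemma one_G: "\<one>\<^bsub>G\<^esub> = (\<lambda>i\<in>I. 0)"
  unfolding Gp_def by simp

lemma inv_G: "x \<in> carrier G \<Longrightarrow> inv\<^bsub>G\<^esub> x = (\<lambda>i\<in>I. (- x i) mod P i)"
  unfolding Gp_def by (auto simp: PiE_iff intro!: restrict_ext)

lemma pow_G: "x \<in> carrier G \<Longrightarrow> x [^]\<^bsub>G\<^esub> (m::nat) = (\<lambda>i\<in>I. (int m * x i) mod P i)"
  by (induction m) (simp_all add: one_G mult_G fun_eq_iff mod_add_right_eq algebra_simps)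

lemma iso_G_of_inj: "f \<in> hom G G \<Longrightarrow> inj_on f (carrier G) \<Longrightarrow> f \<in> iso G G"
  using endo_inj_surj[OF finite_carrier_G] by (auto simp: iso_def bij_betw_def hom_def)

lemma power_dvd_iff_mod_eq_0:
  assumes "b \<le> l"
  shows "int p ^ (l - b) dvd x \<longleftrightarrow> (int p ^ b * x) mod (int p ^ l) = 0"
proof -
  have "int p ^ l = int p ^ b * int p ^ (l - b)"
    using assms by (simp flip: power_add)
  then show ?thesis using p_gt1 by (simp add: mod_eq_0_iff_dvd)
qed

lemma integer_mod_group_ord_prime_power_iff:
  assumes "x \<in> carrier (integer_mod_group (p ^ l))" "b \<le> l"
  shows "(\<exists>c\<le>b. group.ord (integer_mod_group (p ^ l)) x = p ^ c) \<longleftrightarrow> int p ^ (l - b) dvd x"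
proof -
  interpret Z: group "integer_mod_group (p ^ l)" by simp
  have "(\<exists>c\<le>b. Z.ord x = p ^ c) \<longleftrightarrow> Z.ord x dvd p ^ b"
    by (rule divides_primepow_nat[OF prime, symmetric])
  also have "\<dots> \<longleftrightarrow> x [^]\<^bsub>integer_mod_group (p ^ l)\<^esub> (p ^ b) = \<one>\<^bsub>integer_mod_group (p ^ l)\<^esub>"
    by (rule Z.pow_eq_id[OF assms(1), symmetric])
  also have "\<dots> \<longleftrightarrow> (int p ^ b * x) mod (int p ^ l) = 0"
    by simp
  also have "\<dots> \<longleftrightarrow> int p ^ (l - b) dvd x"
    using power_dvd_iff_mod_eq_0[OF assms(2)] by simp
  finally show ?thesis .
qed

text \<open>The divisibility description of R(b): the coordinates of order at most p ^ b i in
  Z/p ^ lam i are exactly the multiples of p ^ (lam i - b i).\<close>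

definition Rdiv :: "(nat \<Rightarrow> nat) \<Rightarrow> (nat \<Rightarrow> int) set" where
  "Rdiv b = {g \<in> carrier G. \<forall>i\<in>I. int p ^ (lam i - b i) dvd g i}"

lemma Rset_eq_Rdiv:
  assumes "\<forall>i\<in>I. b i \<le> lam i"
  shows "Rset p lam n b = Rdiv b"
proof -
  have coord: "g i \<in> carrier (integer_mod_group (p ^ lam i))" if "g \<in> carrier G" "i \<in> I" for g i
    using that unfolding Gp_def by auto
  have "g \<in> Rset p lam n b \<longleftrightarrow>
      g \<in> carrier G \<and> (\<forall>i\<in>I. \<exists>c\<le>b i. group.ord (integer_mod_group (p ^ lam i)) (g i) = p ^ c)"
    for g
  proof
    assume "g \<in> Rset p lam n b"
    then show "g \<in> carrier G \<and> (\<forall>i\<in>I. \<exists>c\<le>b i. group.ord (integer_mod_group (p ^ lam i)) (g i) = p ^ c)"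
      unfolding Rset_def Tset_def by blast
  next
    assume g: "g \<in> carrier G \<and> (\<forall>i\<in>I. \<exists>c\<le>b i. group.ord (integer_mod_group (p ^ lam i)) (g i) = p ^ c)"
    define c where "c i = (SOME c. c \<le> b i \<and> group.ord (integer_mod_group (p ^ lam i)) (g i) = p ^ c)"
      for i
    have "c i \<le> b i \<and> group.ord (integer_mod_group (p ^ lam i)) (g i) = p ^ c i" if "i \<in> I" for i
    proof -
      have "\<exists>c\<le>b i. group.ord (integer_mod_group (p ^ lam i)) (g i) = p ^ c"
        using g that by blast
      then show ?thesis unfolding c_def by (rule someI_ex)
    qed
    then show "g \<in> Rset p lam n b"
      using g unfolding Rset_def Tset_def by blast
  qed
  moreover have "(\<exists>c\<le>b i. group.ord (integer_mod_group (p ^ lam i)) (g i) = p ^ c)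
      \<longleftrightarrow> int p ^ (lam i - b i) dvd g i" if "g \<in> carrier G" "i \<in> I" for g i
    using integer_mod_group_ord_prime_power_iff[OF coord[OF that], where b = "b i"] assms that by simp
  ultimately show ?thesis
    unfolding Rdiv_def by auto
qed

lemma omega_times_powers_coord_dvd:
  assumes "g \<in> omega_times_powers G (p ^ k) (p ^ (lam i - k))" "k \<le> lam i" "i \<in> I"
  shows "int p ^ (lam i - k) dvd g i"
proof -
  obtain u w where u: "u \<in> carrier G" and w: "w \<in> carrier G"
    and torsion: "u [^]\<^bsub>G\<^esub> (p ^ k) = \<one>\<^bsub>G\<^esub>"
    and g: "g = u \<otimes>\<^bsub>G\<^esub> w [^]\<^bsub>G\<^esub> (p ^ (lam i - k))"
    using assms(1) unfolding omega_times_powers_def by blast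
  have u_i: "(int p ^ k * u i) mod P i = 0"
    using fun_cong[OF torsion, of i] u assms(3) by (simp add: pow_G one_G)
  have P_i: "int p ^ k * int p ^ (lam i - k) = P i"
    using assms(2) by (simp flip: power_add)
  have mod_expand: "(c * ((x + (d * y) mod M) mod M)) mod M = (c * x + c * d * y) mod M"
    for c x d y M :: int
    by (simp add: mod_simps algebra_simps)
  have "g i = (u i + (int p ^ (lam i - k) * w i) mod P i) mod P i"
    using g assms(3) w by (simp add: mult_G pow_G)
  then have "(int p ^ k * g i) mod P i = (int p ^ k * u i + int p ^ k * int p ^ (lam i - k) * w i) mod P i"
    using mod_expand by presburger
  also have "\<dots> = (int p ^ k * u i + P i * w i) mod P i"
    unfolding P_i ..
  also have "\<dots> = 0"
    using u_i by simp
  finally show ?thesis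
    using power_dvd_iff_mod_eq_0[OF assms(2)] by simp
qed

text \<open>For canonical b, an element of R(b) splits at any coordinate i into a part of order
  dividing p ^ b i (the coordinates up to i) and a p ^ (lam i - b i)-th power (the coordinates
  beyond i); conditions (I) and (II) are exactly what makes both parts work.\<close>

lemma Rdiv_prefix_torsion:
  assumes can: "canonical lam n b" and i: "i \<in> I" and g: "g \<in> Rdiv b"
  shows "(\<lambda>j\<in>I. if j \<le> i then g j else 0) [^]\<^bsub>G\<^esub> (p ^ b i) = \<one>\<^bsub>G\<^esub>"
proof -
  define u where "u = (\<lambda>j\<in>I. if j \<le> i then g j else 0)"
  have g_range: "\<And>j. j \<in> I \<Longrightarrow> 0 \<le> g j \<and> g j < P j"
    using g in_carrier_G unfolding Rdiv_def by auto
  have u: "u \<in> carrier G"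
    unfolding in_carrier_G u_def using g_range p_gt1 by auto
  have torsion: "(int p ^ b i * u j) mod P j = 0" if j: "j \<in> I" for j
  proof (cases "j \<le> i")
    case True
    have "int p ^ b j dvd int p ^ b i"
      using canonical_mono[OF can, of j i] True j i by (simp add: le_imp_power_dvd)
    moreover have "int p ^ (lam j - b j) dvd g j"
      using g j unfolding Rdiv_def by blast
    ultimately have "int p ^ b j * int p ^ (lam j - b j) dvd int p ^ b i * g j"
      by (rule mult_dvd_mono)
    then show ?thesis
      using canonical_le[OF can j] True j unfolding u_def by (simp flip: power_add)
  next
    case False
    then show ?thesis using j by (simp add: u_def)
  qed
  show ?thesis
    unfolding u_def[symmetric] pow_G[OF u] one_G
    by (rule restrict_ext) (use torsion in simp)
qed

lemma Rdiv_suffix_power: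
  assumes can: "canonical lam n b" and i: "i \<in> I" and g: "g \<in> Rdiv b"
  shows "\<exists>w\<in>carrier G. (\<lambda>j\<in>I. if j \<le> i then 0 else g j) = w [^]\<^bsub>G\<^esub> (p ^ (lam i - b i))"
proof
  define k where "k = lam i - b i"
  define w where "w = (\<lambda>j\<in>I. if j \<le> i then 0 else g j div int p ^ k)"
  have g_range: "\<And>j. j \<in> I \<Longrightarrow> 0 \<le> g j \<and> g j < P j"
    using g in_carrier_G unfolding Rdiv_def by auto
  have "0 \<le> g j div int p ^ k \<and> g j div int p ^ k < P j" if "j \<in> I" for j
    using zdiv_mono2[of "g j" 1 "int p ^ k"] g_range[OF that] p_gt1
    by (auto simp: pos_imp_zdiv_nonneg_iff)
  then show w: "w \<in> carrier G"
    unfolding in_carrier_G w_def using p_gt1 by auto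
  have divides: "int p ^ k * (g j div int p ^ k) = g j" if "j \<in> I" "i < j" for j
  proof -
    have "k \<le> lam j - b j"
      using canonical_mono[OF can, of i j] canonical_le[OF can] i that unfolding k_def by force
    moreover have "int p ^ (lam j - b j) dvd g j"
      using g that(1) unfolding Rdiv_def by blast
    ultimately have "int p ^ k dvd g j"
      using le_imp_power_dvd dvd_trans by blast
    then show ?thesis by simp
  qed
  show "(\<lambda>j\<in>I. if j \<le> i then 0 else g j) = w [^]\<^bsub>G\<^esub> (p ^ (lam i - b i))"
    unfolding pow_G[OF w] k_def[symmetric]
  proof (rule restrict_ext)
    fix j assume j: "j \<in> I"
    show "(if j \<le> i then 0 else g j) = (int (p ^ k) * w j) mod P j"
      using divides[OF j] g_range[OF j] j by (cases "j \<le> i") (simp_all add: w_def)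
  qed
qed

lemma Rdiv_subset_omega_times_powers:
  assumes can: "canonical lam n b" and i: "i \<in> I"
  shows "Rdiv b \<subseteq> omega_times_powers G (p ^ b i) (p ^ (lam i - b i))"
proof
  fix g assume g: "g \<in> Rdiv b"
  define u where "u = (\<lambda>j\<in>I. if j \<le> i then g j else 0)"
  obtain w where w: "w \<in> carrier G"
    and suffix: "(\<lambda>j\<in>I. if j \<le> i then 0 else g j) = w [^]\<^bsub>G\<^esub> (p ^ (lam i - b i))"
    using Rdiv_suffix_power[OF can i g] by blast
  have g_carrier: "g \<in> carrier G" using g unfolding Rdiv_def by blast
  then have "u \<in> carrier G"
    unfolding in_carrier_G u_def using p_gt1 by auto
  moreover have "g = u \<otimes>\<^bsub>G\<^esub> (\<lambda>j\<in>I. if j \<le> i then 0 else g j)"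
  proof
    fix j
    show "g j = (u \<otimes>\<^bsub>G\<^esub> (\<lambda>j\<in>I. if j \<le> i then 0 else g j)) j"
      using g_carrier in_carrier_G[of g] by (cases "j \<in> I") (auto simp: mult_G u_def)
  qed
  moreover have "u [^]\<^bsub>G\<^esub> (p ^ b i) = \<one>\<^bsub>G\<^esub>"
    unfolding u_def by (rule Rdiv_prefix_torsion[OF can i g])
  ultimately show "g \<in> omega_times_powers G (p ^ b i) (p ^ (lam i - b i))"
    using w unfolding suffix omega_times_powers_def by fast
qed

lemma Rdiv_eq_Inter_omega_times_powers:
  assumes "canonical lam n b"
  shows "Rdiv b = carrier G \<inter> (\<Inter>i\<in>I. omega_times_powers G (p ^ b i) (p ^ (lam i - b i)))"
proof
  show "Rdiv b \<subseteq> carrier G \<inter> (\<Inter>i\<in>I. omega_times_powers G (p ^ b i) (p ^ (lam i - b i)))"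
    using Rdiv_subset_omega_times_powers[OF assms] Rdiv_def by blast
next
  show "carrier G \<inter> (\<Inter>i\<in>I. omega_times_powers G (p ^ b i) (p ^ (lam i - b i))) \<subseteq> Rdiv b"
  proof
    fix g assume g: "g \<in> carrier G \<inter> (\<Inter>i\<in>I. omega_times_powers G (p ^ b i) (p ^ (lam i - b i)))"
    have "int p ^ (lam i - b i) dvd g i" if "i \<in> I" for i
      using omega_times_powers_coord_dvd[of g "b i" i] g canonical_le[OF assms that] that by blast
    then show "g \<in> Rdiv b" using g unfolding Rdiv_def by blast
  qed
qed

lemma Rdiv_subgroup:
  assumes "\<forall>i\<in>I. b i \<le> lam i"
  shows "subgroup (Rdiv b) G"
proof -
  interpret group G by (rule group_G)
  have P_dvd: "int p ^ (lam i - b i) dvd P i" if "i \<in> I" for i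
    using assms that by (simp add: le_imp_power_dvd)
  show ?thesis
  proof (rule subgroupI)
    show "Rdiv b \<subseteq> carrier G" "Rdiv b \<noteq> {}"
      unfolding Rdiv_def by (auto simp: one_G intro!: exI[of _ "\<one>\<^bsub>G\<^esub>"])
  next
    fix x y assume "x \<in> Rdiv b" "y \<in> Rdiv b"
    then have x: "x \<in> carrier G" "\<forall>i\<in>I. int p ^ (lam i - b i) dvd x i"
      and y: "y \<in> carrier G" "\<forall>i\<in>I. int p ^ (lam i - b i) dvd y i"
      unfolding Rdiv_def by auto
    show "inv\<^bsub>G\<^esub> x \<in> Rdiv b"
      unfolding Rdiv_def using inv_closed[OF x(1)] x P_dvd by (auto simp: inv_G dvd_mod_iff)
    show "x \<otimes>\<^bsub>G\<^esub> y \<in> Rdiv b"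
      unfolding Rdiv_def using m_closed[OF x(1) y(1)] x y P_dvd by (auto simp: mult_G dvd_mod_iff)
  qed
qed

lemma Rdiv_char_subgroup:
  assumes "canonical lam n b"
  shows "Rdiv b \<in> char_subgroups G"
proof (rule group.char_subgroupI[OF group_G finite_carrier_G])
  show "subgroup (Rdiv b) G"
    using Rdiv_subgroup canonical_le[OF assms] by blast
  fix f assume f: "f \<in> hom G G"
  have "f ` omega_times_powers G (p ^ b i) (p ^ (lam i - b i))
      \<subseteq> omega_times_powers G (p ^ b i) (p ^ (lam i - b i))" for i
    using group.hom_image_omega_times_powers[OF group_G f] .
  moreover have "f ` carrier G \<subseteq> carrier G"
    using f by (auto simp: hom_def)
  ultimately show "f ` Rdiv b \<subseteq> Rdiv b"
    unfolding Rdiv_eq_Inter_omega_times_powers[OF assms] by blast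
qed

lemma Rdiv_mono:
  assumes "\<forall>i\<in>I. b i \<le> a i"
  shows "Rdiv b \<subseteq> Rdiv a"
proof
  fix g assume g: "g \<in> Rdiv b"
  have "int p ^ (lam i - a i) dvd g i" if "i \<in> I" for i
  proof -
    have "int p ^ (lam i - a i) dvd int p ^ (lam i - b i)"
      using assms that by (simp add: le_imp_power_dvd diff_le_mono2)
    then show ?thesis using g that unfolding Rdiv_def by (blast intro: dvd_trans)
  qed
  then show "g \<in> Rdiv a" using g unfolding Rdiv_def by blast
qed

section \<open>Automorphisms and generators\<close>

definition single :: "nat \<Rightarrow> int \<Rightarrow> (nat \<Rightarrow> int)" where
  "single j t = (\<lambda>k\<in>I. if k = j then t else 0)"

lemma single_in_carrier: "j \<in> I \<Longrightarrow> 0 \<le> t \<Longrightarrow> t < P j \<Longrightarrow> single j t \<in> carrier G"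
  unfolding in_carrier_G single_def using p_gt1 by auto

lemma single_pow: "single j t \<in> carrier G \<Longrightarrow> single j t [^]\<^bsub>G\<^esub> m = single j ((int m * t) mod P j)"
  by (auto simp: pow_G single_def intro!: restrict_ext)

lemma single_zero: "single j 0 = \<one>\<^bsub>G\<^esub>"
  by (auto simp: single_def one_G intro!: restrict_ext)

lemma mem_subgroup_of_singles:
  assumes H: "subgroup H G" and z: "z \<in> carrier G" and singles: "\<And>j. j \<in> I \<Longrightarrow> single j (z j) \<in> H"
  shows "z \<in> H"
proof -
  have z_range: "\<And>j. j \<in> I \<Longrightarrow> 0 \<le> z j \<and> z j < P j" and z_undef: "\<And>j. j \<notin> I \<Longrightarrow> z j = undefined"
    using z in_carrier_G by auto
  define prefix where "prefix k = (\<lambda>j\<in>I. if j \<le> k then z j else 0)" for k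
  have "prefix k \<in> H" for k
  proof (induction k)
    case 0
    have "prefix 0 = \<one>\<^bsub>G\<^esub>" by (auto simp: prefix_def one_G intro!: restrict_ext)
    then show ?case using subgroup.one_closed[OF H] by simp
  next
    case (Suc k)
    show ?case
    proof (cases "Suc k \<in> I")
      case True
      have "prefix (Suc k) = prefix k \<otimes>\<^bsub>G\<^esub> single (Suc k) (z (Suc k))"
        using z_range by (auto simp: prefix_def mult_G single_def intro!: restrict_ext)
      then show ?thesis using Suc singles[OF True] subgroup.m_closed[OF H] by simp
    next
      case False
      then have "prefix (Suc k) = prefix k" by (auto simp: prefix_def intro!: restrict_ext)
      then show ?thesis using Suc by simp
    qed
  qed
  moreover have "prefix n = z"
  proof
    fix j show "prefix n j = z j" using z_undef by (cases "j \<in> I") (auto simp: prefix_def)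
  qed
  ultimately show ?thesis by metis
qed

lemma single_multiple_in_subgroup:
  assumes H: "subgroup H G" and j: "j \<in> I" and e: "e < lam j" and gen: "single j (int p ^ e) \<in> H"
    and t: "0 \<le> t" "t < P j" "int p ^ e dvd t"
  shows "single j t \<in> H"
proof -
  obtain r where r: "t = int p ^ e * r" using t(3) by blast
  have "int p ^ e > 0" using p_gt1 by simp
  then have "0 \<le> r" using t(1) r by (metis linorder_not_le mult_pos_neg)
  have "int p ^ e < P j" using e p_gt1 by (simp add: power_strict_increasing)
  then have "single j (int p ^ e) \<in> carrier G" using single_in_carrier[OF j] by simp
  then have "single j (int p ^ e) [^]\<^bsub>G\<^esub> nat r = single j ((int (nat r) * int p ^ e) mod P j)"
    by (rule single_pow)
  also have "\<dots> = single j t"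
    using r \<open>0 \<le> r\<close> t by (simp add: mult.commute)
  finally show ?thesis using group.subgroup_nat_pow_closed[OF group_G H gen] by metis
qed

text \<open>A multiple p ^ D * v of p ^ D with v prime to p generates the same cyclic subgroup of
  Z/p ^ lam i as p ^ D; the inverse of v modulo p ^ (lam i - D) comes from Bezout.\<close>

lemma single_prime_power_in_subgroup:
  assumes H: "subgroup H G" and i: "i \<in> I" and D: "D < lam i" and v: "\<not> int p dvd v"
    and gen: "single i (int p ^ D * v) \<in> H" and range: "0 \<le> int p ^ D * v" "int p ^ D * v < P i"
  shows "single i (int p ^ D) \<in> H"
proof -
  define q where "q = int p ^ (lam i - D)"
  have q1: "q > 1" unfolding q_def using D p_gt1 by (intro one_less_power) auto
  have "Factorial_Ring.prime (int p)" using prime by simp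
  then have "coprime v q"
    unfolding q_def using prime_imp_power_coprime v by blast
  then obtain x y where xy: "x * v + y * q = 1"
    using bezout_int[of v q] by (auto simp: coprime_iff_gcd_eq_1)
  define m where "m = nat (x mod q)"
  have m: "int m = x mod q" unfolding m_def using q1 by simp
  have P_i: "P i = int p ^ D * q" unfolding q_def using D by (simp flip: power_add)
  have "int m * (int p ^ D * v) = int p ^ D * ((x mod q) * v)"
    unfolding m by (simp only: ac_simps)
  then have "(int m * (int p ^ D * v)) mod P i = int p ^ D * (((x mod q) * v) mod q)"
    unfolding P_i by (simp only: mult_mod_right)
  also have "((x mod q) * v) mod q = (x * v) mod q"
    by (rule mod_mult_left_eq)
  also have "x * v = 1 + (- y) * q"
    using xy by simp
  also have "(1 + (- y) * q) mod q = 1 mod q"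
    by (rule mod_mult_self1)
  also have "(1::int) mod q = 1"
    using q1 by simp
  finally have "(int m * (int p ^ D * v)) mod P i = int p ^ D" by simp
  moreover have "single i (int p ^ D * v) \<in> carrier G"
    using single_in_carrier[OF i range] .
  ultimately show ?thesis
    using group.subgroup_nat_pow_closed[OF group_G H gen, of m] single_pow by metis
qed

text \<open>The natural homomorphism Z/p ^ lam i \<rightarrow> Z/p ^ lam j: the embedding if i < j, the
  reduction otherwise.\<close>

definition coord_hom :: "nat \<Rightarrow> nat \<Rightarrow> int \<Rightarrow> int" where
  "coord_hom i j t = (if i < j then int p ^ (lam j - lam i) * t else t)"

lemma coord_hom_mod:
  assumes "i \<in> I" "j \<in> I"
  shows "coord_hom i j (t mod P i) mod P j = coord_hom i j t mod P j"
proof (cases "i < j")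
  case True
  then have "int p ^ (lam j - lam i) * P i = P j"
    using lam_mono[of i j] assms by (simp flip: power_add)
  then show ?thesis
    using True by (metis coord_hom_def mod_mod_trivial mult_mod_right)
next
  case False
  then have "P j dvd P i" using lam_mono[of j i] assms by (simp add: le_imp_power_dvd)
  then show ?thesis using False by (simp add: coord_hom_def mod_mod_cancel)
qed

lemma coord_hom_add: "coord_hom i j (s + t) = coord_hom i j s + coord_hom i j t"
  by (simp add: coord_hom_def distrib_left)

definition transvection :: "nat \<Rightarrow> nat \<Rightarrow> (nat \<Rightarrow> int) \<Rightarrow> (nat \<Rightarrow> int)" where
  "transvection i j x = (\<lambda>k\<in>I. if k = j then (x k + coord_hom i j (x i)) mod P k else x k)"

lemma transvection_hom:
  assumes i: "i \<in> I" and j: "j \<in> I" and ij: "i \<noteq> j"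
  shows "transvection i j \<in> hom G G"
proof (rule homI)
  fix x assume "x \<in> carrier G"
  then show "transvection i j x \<in> carrier G"
    unfolding in_carrier_G transvection_def using p_gt1 by auto
next
  fix x y assume "x \<in> carrier G" "y \<in> carrier G"
  have "((x j + y j) mod P j + coord_hom i j ((x i + y i) mod P i)) mod P j
      = ((x j + y j) + coord_hom i j ((x i + y i) mod P i) mod P j) mod P j"
    by (simp add: mod_simps)
  also have "\<dots> = ((x j + y j) + coord_hom i j (x i + y i) mod P j) mod P j"
    using coord_hom_mod[OF i j] by simp
  also have "\<dots> = ((x j + y j) + (coord_hom i j (x i) + coord_hom i j (y i)) mod P j) mod P j"
    by (simp only: coord_hom_add)
  also have "\<dots> = ((x j + y j) + (coord_hom i j (x i) + coord_hom i j (y i))) mod P j"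
    by (rule mod_add_right_eq)
  also have "\<dots> = ((x j + coord_hom i j (x i)) + (y j + coord_hom i j (y i))) mod P j"
    by (simp only: ac_simps)
  also have "\<dots> = ((x j + coord_hom i j (x i)) mod P j + (y j + coord_hom i j (y i)) mod P j) mod P j"
    by (rule mod_add_eq[symmetric])
  finally show "transvection i j (x \<otimes>\<^bsub>G\<^esub> y) = transvection i j x \<otimes>\<^bsub>G\<^esub> transvection i j y"
    using i j ij by (auto simp: transvection_def mult_G intro!: restrict_ext)
qed

lemma transvection_inj:
  assumes i: "i \<in> I" and j: "j \<in> I" and ij: "i \<noteq> j"
  shows "inj_on (transvection i j) (carrier G)"
proof (rule inj_onI)
  fix x y assume x: "x \<in> carrier G" and y: "y \<in> carrier G"
    and eq: "transvection i j x = transvection i j y"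
  have other: "x k = y k" if "k \<in> I" "k \<noteq> j" for k
    using fun_cong[OF eq, of k] that by (simp add: transvection_def)
  have "(x j + coord_hom i j (x i)) mod P j = (y j + coord_hom i j (x i)) mod P j"
    using fun_cong[OF eq, of j] j other[OF i ij] by (simp add: transvection_def)
  then have "P j dvd x j - y j"
    by (simp add: mod_eq_dvd_iff)
  then have "x j = y j"
    using x y j in_carrier_G eq_if_dvd_diff_in_range by blast
  then show "x = y"
    using other x y in_carrier_G by (metis ext)
qed

lemma transvection_iso: "i \<in> I \<Longrightarrow> j \<in> I \<Longrightarrow> i \<noteq> j \<Longrightarrow> transvection i j \<in> iso G G"
  using iso_G_of_inj transvection_hom transvection_inj by blast

lemma transvection_single_quotient:
  assumes "i \<in> I" "j \<in> I" "i \<noteq> j" "single i c \<in> carrier G"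
  shows "transvection i j (single i c) \<otimes>\<^bsub>G\<^esub> inv\<^bsub>G\<^esub> (single i c) = single j (coord_hom i j c mod P j)"
  using assms by (auto simp: inv_G transvection_def mult_G single_def mod_simps intro!: restrict_ext)

lemma char_subgroup_transvected_single:
  assumes H: "H \<in> char_subgroups G" and i: "i \<in> I" and j: "j \<in> I" "i \<noteq> j"
    and c: "single i c \<in> H"
  shows "single j (coord_hom i j c mod P j) \<in> H"
proof -
  have "single i c \<in> carrier G"
    using c subgroup.subset[OF char_subgroups_subgroup[OF H]] by blast
  then have "transvection i j (single i c) \<otimes>\<^bsub>G\<^esub> inv\<^bsub>G\<^esub> (single i c) = single j (coord_hom i j c mod P j)"
    by (rule transvection_single_quotient[OF i j])
  then show ?thesis
    using group.char_subgroups_iso_quotient_closed[OF group_G H transvection_iso[OF i j] c] by simp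
qed

section \<open>Join-irreducibility of R(a)\<close>

lemma Rdiv_lower_mem_iff:
  assumes can: "canonical lam n a" and nd: "nondegenerate_at lam n a i" and g: "g \<in> Rdiv a"
  shows "g \<in> Rdiv (a(i := a i - 1)) \<longleftrightarrow> int p ^ (lam i - a i + 1) dvd g i"
proof -
  have i: "i \<in> I" using nd unfolding nondegenerate_at_def by blast
  have "lam i - (a i - 1) = lam i - a i + 1"
    using nondegenerate_pos[OF can nd] canonical_le[OF can i] by simp
  then show ?thesis using g i unfolding Rdiv_def by auto
qed

lemma Rdiv_lower_psubset:
  assumes can: "canonical lam n a" and nd: "nondegenerate_at lam n a i"
  shows "Rdiv (a(i := a i - 1)) \<subset> Rdiv a"
proof -
  have i: "i \<in> I" using nd unfolding nondegenerate_at_def by blast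
  define x where "x = single i (int p ^ (lam i - a i))"
  have "lam i - a i < lam i"
    using nondegenerate_pos[OF can nd] canonical_le[OF can i] by simp
  then have "x \<in> carrier G"
    unfolding x_def using single_in_carrier[OF i] p_gt1 by (simp add: power_strict_increasing)
  then have x: "x \<in> Rdiv a"
    using i unfolding Rdiv_def x_def by (auto simp: single_def)
  have "\<not> int p ^ (lam i - a i + 1) dvd int p ^ (lam i - a i)"
    using p_gt1 by (simp add: dvd_power_iff)
  then have "x \<notin> Rdiv (a(i := a i - 1))"
    using Rdiv_lower_mem_iff[OF can nd x] i by (simp add: x_def single_def)
  moreover have "Rdiv (a(i := a i - 1)) \<subseteq> Rdiv a"
    by (rule Rdiv_mono) simp
  ultimately show ?thesis using x by blast
qed

lemma Rdiv_trivial_if_all_degenerate: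
  assumes "\<And>j. \<not> nondegenerate_at lam n a j"
  shows "Rdiv a = {\<one>\<^bsub>G\<^esub>}"
proof -
  have a0: "a j = 0" if "j \<in> I" for j
    using all_degenerate_imp_zero[OF _ that] assms unfolding nondegenerate_at_def by blast
  have "g = \<one>\<^bsub>G\<^esub>" if g: "g \<in> Rdiv a" for g
  proof
    fix j
    have "g j = 0" if j: "j \<in> I"
    proof -
      have "P j dvd g j" using g j a0[OF j] unfolding Rdiv_def by force
      then show ?thesis
        using g j in_carrier_G eq_if_dvd_diff_in_range[of "g j" "P j" 0] p_gt1 unfolding Rdiv_def by auto
    qed
    then show "g j = \<one>\<^bsub>G\<^esub> j"
      using g in_carrier_G unfolding Rdiv_def by (auto simp: one_G)
  qed
  moreover have "\<one>\<^bsub>G\<^esub> \<in> Rdiv a"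
    unfolding Rdiv_def using monoid.one_closed[OF group.is_monoid[OF group_G]] by (simp add: one_G)
  ultimately show ?thesis by blast
qed

lemma Rdiv_join_of_lowerings:
  assumes can: "canonical lam n a" and nd_i: "nondegenerate_at lam n a i"
    and nd_j: "nondegenerate_at lam n a j" and ij: "i \<noteq> j"
  shows "is_join_in (char_subgroups G) (Rdiv (a(i := a i - 1))) (Rdiv (a(j := a j - 1))) (Rdiv a)"
  unfolding is_join_in_def
proof (intro conjI ballI impI)
  show "Rdiv a \<in> char_subgroups G" using Rdiv_char_subgroup[OF can] .
  show "Rdiv (a(i := a i - 1)) \<subseteq> Rdiv a" "Rdiv (a(j := a j - 1)) \<subseteq> Rdiv a"
    by (rule Rdiv_mono; simp)+
next
  fix H assume H: "H \<in> char_subgroups G"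
    and lowerings: "Rdiv (a(i := a i - 1)) \<subseteq> H \<and> Rdiv (a(j := a j - 1)) \<subseteq> H"
  have i: "i \<in> I" using nd_i unfolding nondegenerate_at_def by blast
  show "Rdiv a \<subseteq> H"
  proof
    fix g assume g: "g \<in> Rdiv a"
    then have g_carrier: "g \<in> carrier G" and g_dvd: "\<And>k. k \<in> I \<Longrightarrow> int p ^ (lam k - a k) dvd g k"
      unfolding Rdiv_def by auto
    have g_range: "\<And>k. k \<in> I \<Longrightarrow> 0 \<le> g k \<and> g k < P k" and g_undef: "\<And>k. k \<notin> I \<Longrightarrow> g k = undefined"
      using g_carrier in_carrier_G by auto
    define u where "u = (\<lambda>k\<in>I. if k = i then 0 else g k)"
    have "u \<in> carrier G" unfolding in_carrier_G u_def using g_range p_gt1 by auto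
    then have "u \<in> Rdiv (a(i := a i - 1))" unfolding Rdiv_def using g_dvd by (auto simp: u_def)
    moreover have "single i (g i) \<in> carrier G" using single_in_carrier[OF i] g_range[OF i] by blast
    then have "single i (g i) \<in> Rdiv (a(j := a j - 1))"
      unfolding Rdiv_def using g_dvd[OF i] ij i by (auto simp: single_def)
    moreover have "g = u \<otimes>\<^bsub>G\<^esub> single i (g i)"
    proof
      fix k show "g k = (u \<otimes>\<^bsub>G\<^esub> single i (g i)) k"
        using g_range g_undef by (cases "k \<in> I") (auto simp: mult_G u_def single_def)
    qed
    ultimately show "g \<in> H"
      using lowerings subgroup.m_closed[OF char_subgroups_subgroup[OF H]] by (metis subsetD)
  qed
qed

lemma not_join_irreducible_Rdiv_if_all_degenerate:
  assumes "\<And>j. \<not> nondegenerate_at lam n a j"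
  shows "\<not> join_irreducible_in (char_subgroups G) (Rdiv a)"
proof -
  have "{\<one>\<^bsub>G\<^esub>} \<subseteq> H" if "H \<in> char_subgroups G" for H
    using subgroup.one_closed[OF char_subgroups_subgroup[OF that]] by simp
  then show ?thesis
    unfolding join_irreducible_in_def Rdiv_trivial_if_all_degenerate[OF assms] by blast
qed

lemma not_join_irreducible_Rdiv_if_two_nondegenerate:
  assumes can: "canonical lam n a" and "nondegenerate_at lam n a i" "nondegenerate_at lam n a j"
    and "i \<noteq> j"
  shows "\<not> join_irreducible_in (char_subgroups G) (Rdiv a)"
proof -
  have "Rdiv (a(i := a i - 1)) \<in> char_subgroups G" "Rdiv (a(j := a j - 1)) \<in> char_subgroups G"
    using Rdiv_char_subgroup[OF canonical_lower_nondegenerate[OF can]] assms(2,3) by blast+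
  moreover have "Rdiv (a(i := a i - 1)) \<subset> Rdiv a" "Rdiv (a(j := a j - 1)) \<subset> Rdiv a"
    using Rdiv_lower_psubset[OF can] assms(2,3) by blast+
  ultimately show ?thesis
    using Rdiv_join_of_lowerings[OF assms] unfolding join_irreducible_in_def by blast
qed

end

locale odd_prime_power_product = prime_power_product +
  assumes odd: "p \<noteq> 2"
begin

lemma odd_P: "odd (P i)"
  using prime odd by (metis even_of_nat two_is_prime prime_dvd_power primes_dvd_imp_eq)

definition double_coord :: "nat \<Rightarrow> (nat \<Rightarrow> int) \<Rightarrow> (nat \<Rightarrow> int)" where
  "double_coord i x = (\<lambda>k\<in>I. if k = i then (2 * x k) mod P k else x k)"

lemma double_coord_iso: "double_coord i \<in> iso G G"
proof (rule iso_G_of_inj)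
  show "double_coord i \<in> hom G G"
  proof (rule homI)
    fix x assume "x \<in> carrier G"
    then show "double_coord i x \<in> carrier G"
      unfolding in_carrier_G double_coord_def using p_gt1 by auto
  next
    fix x y assume "x \<in> carrier G" "y \<in> carrier G"
    show "double_coord i (x \<otimes>\<^bsub>G\<^esub> y) = double_coord i x \<otimes>\<^bsub>G\<^esub> double_coord i y"
      by (auto simp: double_coord_def mult_G mod_simps distrib_left intro!: restrict_ext)
  qed
next
  show "inj_on (double_coord i) (carrier G)"
  proof (rule inj_onI)
    fix x y assume x: "x \<in> carrier G" and y: "y \<in> carrier G"
      and eq: "double_coord i x = double_coord i y"
    have "x k = y k" if k: "k \<in> I" for k
    proof (cases "k = i")
      case True
      then have "P k dvd 2 * (x k - y k)"
        using fun_cong[OF eq, of k] k by (simp add: double_coord_def mod_eq_dvd_iff algebra_simps)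
      moreover have "coprime (P k) 2" using odd_P by (simp add: coprime_commute)
      ultimately have "P k dvd x k - y k" using coprime_dvd_mult_right_iff by blast
      then show ?thesis using x y k in_carrier_G eq_if_dvd_diff_in_range by blast
    qed (use fun_cong[OF eq, of k] k in \<open>simp add: double_coord_def\<close>)
    then show "x = y" using x y in_carrier_G by (metis ext)
  qed
qed

lemma double_coord_quotient:
  assumes "g \<in> carrier G" "i \<in> I"
  shows "double_coord i g \<otimes>\<^bsub>G\<^esub> inv\<^bsub>G\<^esub> g = single i (g i)"
  using assms in_carrier_G
  by (auto simp: double_coord_def mult_G inv_G single_def mod_simps intro!: restrict_ext)

lemma char_subgroup_single_coord:
  assumes "H \<in> char_subgroups G" "g \<in> H" "i \<in> I"
  shows "single i (g i) \<in> H"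
proof -
  have "g \<in> carrier G"
    using assms(1,2) subgroup.subset[OF char_subgroups_subgroup] by blast
  then have "double_coord i g \<otimes>\<^bsub>G\<^esub> inv\<^bsub>G\<^esub> g = single i (g i)"
    using double_coord_quotient assms(3) by blast
  then show ?thesis
    using group.char_subgroups_iso_quotient_closed[OF group_G assms(1) double_coord_iso[of i] assms(2)] by simp
qed

lemma char_subgroup_contains_generator:
  assumes H: "H \<in> char_subgroups G" and g: "g \<in> H" "g \<in> Rdiv a"
    and i: "i \<in> I" and a_i: "1 \<le> a i" "a i \<le> lam i"
    and not_lower: "\<not> int p ^ (lam i - a i + 1) dvd g i"
  shows "single i (int p ^ (lam i - a i)) \<in> H"
proof -
  have "int p ^ (lam i - a i) dvd g i" using g(2) i unfolding Rdiv_def by blast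
  then obtain v where v: "g i = int p ^ (lam i - a i) * v" by blast
  have "\<not> int p dvd v"
  proof
    assume "int p dvd v"
    then have "int p ^ (lam i - a i + 1) dvd g i" using v by (simp add: mult_dvd_mono)
    then show False using not_lower by blast
  qed
  moreover have "0 \<le> g i" "g i < P i"
    using g(2) i in_carrier_G unfolding Rdiv_def by auto
  ultimately show ?thesis
    using single_prime_power_in_subgroup[OF char_subgroups_subgroup[OF H] i _ _ _]
      char_subgroup_single_coord[OF H g(1) i] v a_i by simp
qed

text \<open>The exponent bounds of the single nondegenerate coordinate i decide how the transvections
  move the generator p ^ (lam i - a i) e_i: coordinates j > i carry a j = a i, so the embedding
  lands exactly on p ^ (lam j - a j); coordinates j < i with a j > 0 satisfy
  lam i - a i \<le> lam j - a j, so the reduction lands on a multiple of p ^ (lam j - a j).\<close>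

lemma char_subgroup_contains_coordinate_generator:
  assumes can: "canonical lam n a" and i: "i \<in> I" and a_i: "1 \<le> a i"
    and deg: "\<And>j. j \<in> I \<Longrightarrow> j \<noteq> i \<Longrightarrow> degenerate_at lam n a j"
    and H: "H \<in> char_subgroups G" and gen: "single i (int p ^ (lam i - a i)) \<in> H"
    and j: "j \<in> I" "a j \<noteq> 0"
  shows "\<exists>e. e \<le> lam j - a j \<and> e < lam j \<and> single j (int p ^ e) \<in> H"
proof -
  have a_le: "a j \<le> lam j" "a i \<le> lam i" using canonical_le[OF can] i j by auto
  consider "j = i" | "i < j" | "j < i" by linarith
  then show ?thesis
  proof cases
    case 1
    then show ?thesis using gen a_i a_le by auto
  next
    case 2
    have "a j = a i"
      using degenerate_above_imp_const[of i a j] deg i j 2 by auto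
    moreover have "lam i \<le> lam j" using lam_mono[of i j] i j 2 by simp
    ultimately have "coord_hom i j (int p ^ (lam i - a i)) = int p ^ (lam j - a j)"
      unfolding coord_hom_def using 2 a_le by (simp flip: power_add)
    moreover have "int p ^ (lam j - a j) < P j"
      using j a_le p_gt1 by (simp add: power_strict_increasing)
    ultimately have "single j (int p ^ (lam j - a j)) \<in> H"
      using char_subgroup_transvected_single[OF H i j(1) _ gen] 2 by simp
    then show ?thesis using j a_le by auto
  next
    case 3
    have "int (a j) + int (lam i) - int (lam j) \<le> int (a i)"
      using degenerate_below_imp_height_bound[of i a j] deg i j 3 by auto
    then have le: "lam i - a i \<le> lam j - a j" using a_le by linarith
    then have lt: "lam i - a i < lam j" using j a_le by linarith
    then have "int p ^ (lam i - a i) < P j" using p_gt1 by (simp add: power_strict_increasing)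
    then have "single j (int p ^ (lam i - a i)) \<in> H"
      using char_subgroup_transvected_single[OF H i j(1) _ gen] 3 by (simp add: coord_hom_def)
    then show ?thesis using le lt by blast
  qed
qed

lemma char_subgroup_contains_Rdiv:
  assumes can: "canonical lam n a" and i: "i \<in> I" and a_i: "1 \<le> a i"
    and deg: "\<And>j. j \<in> I \<Longrightarrow> j \<noteq> i \<Longrightarrow> degenerate_at lam n a j"
    and H: "H \<in> char_subgroups G" and gen: "single i (int p ^ (lam i - a i)) \<in> H"
  shows "Rdiv a \<subseteq> H"
proof
  have Hs: "subgroup H G" using H by (rule char_subgroups_subgroup)
  fix z assume z: "z \<in> Rdiv a"
  then have z_carrier: "z \<in> carrier G" and z_dvd: "\<And>j. j \<in> I \<Longrightarrow> int p ^ (lam j - a j) dvd z j"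
    unfolding Rdiv_def by auto
  show "z \<in> H"
  proof (rule mem_subgroup_of_singles[OF Hs z_carrier])
    fix j assume j: "j \<in> I"
    have z_range: "0 \<le> z j" "z j < P j" using z_carrier j in_carrier_G by auto
    show "single j (z j) \<in> H"
    proof (cases "a j = 0")
      case True
      then have "z j = 0"
        using z_dvd[OF j] z_range eq_if_dvd_diff_in_range[of "z j" "P j" 0] p_gt1 by simp
      then show ?thesis using single_zero subgroup.one_closed[OF Hs] by simp
    next
      case False
      then obtain e where e: "e \<le> lam j - a j" "e < lam j" "single j (int p ^ e) \<in> H"
        using char_subgroup_contains_coordinate_generator[OF can i a_i deg H gen j] by blast
      have "int p ^ e dvd z j" using dvd_trans[OF le_imp_power_dvd[OF e(1)] z_dvd[OF j]] .
      then show ?thesis using single_multiple_in_subgroup[OF Hs j e(2,3) z_range] by blast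
    qed
  qed
qed

lemma join_irreducible_Rdiv_if_unique_nondegenerate:
  assumes can: "canonical lam n a" and nd: "nondegenerate_at lam n a i"
    and unique: "\<And>j. nondegenerate_at lam n a j \<Longrightarrow> j = i"
  shows "join_irreducible_in (char_subgroups G) (Rdiv a)"
proof (rule join_irreducible_inI_unique_maximal)
  have i: "i \<in> I" using nd unfolding nondegenerate_at_def by blast
  have a_i: "1 \<le> a i" "a i \<le> lam i" using nondegenerate_pos[OF can nd] canonical_le[OF can i] by auto
  have deg: "degenerate_at lam n a j" if "j \<in> I" "j \<noteq> i" for j
    using unique[of j] that unfolding nondegenerate_at_def by auto
  show "Rdiv a \<in> char_subgroups G" by (rule Rdiv_char_subgroup[OF can])
  show "{\<one>\<^bsub>G\<^esub>} \<in> char_subgroups G" by (rule group.trivial_char_subgroup[OF group_G])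
  show "Rdiv (a(i := a i - 1)) \<in> char_subgroups G"
    by (rule Rdiv_char_subgroup[OF canonical_lower_nondegenerate[OF can nd]])
  have lower: "Rdiv (a(i := a i - 1)) \<subset> Rdiv a" by (rule Rdiv_lower_psubset[OF can nd])
  then show "\<not> Rdiv a \<subseteq> Rdiv (a(i := a i - 1))" by blast
  show "\<not> Rdiv a \<subseteq> {\<one>\<^bsub>G\<^esub>}"
    using lower subgroup.one_closed[OF char_subgroups_subgroup[OF \<open>Rdiv (a(i := a i - 1)) \<in> char_subgroups G\<close>]]
    by blast
  fix H assume H: "H \<in> char_subgroups G" and below: "H \<subset> Rdiv a"
  show "H \<subseteq> Rdiv (a(i := a i - 1))"
  proof
    fix g assume g: "g \<in> H"
    have "g \<in> Rdiv a" using g below by blast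
    show "g \<in> Rdiv (a(i := a i - 1))"
    proof (rule ccontr)
      assume "g \<notin> Rdiv (a(i := a i - 1))"
      then have "\<not> int p ^ (lam i - a i + 1) dvd g i"
        using Rdiv_lower_mem_iff[OF can nd \<open>g \<in> Rdiv a\<close>] by blast
      then have "single i (int p ^ (lam i - a i)) \<in> H"
        using char_subgroup_contains_generator[OF H g \<open>g \<in> Rdiv a\<close> i a_i] by blast
      then have "Rdiv a \<subseteq> H"
        using char_subgroup_contains_Rdiv[OF can i a_i(1) deg H] by blast
      then show False using below by blast
    qed
  qed
qed

lemma join_irreducible_Rdiv_iff_unique_nondegenerate:
  assumes can: "canonical lam n a"
  shows "join_irreducible_in (char_subgroups G) (Rdiv a) \<longleftrightarrow> (\<exists>!i. nondegenerate_at lam n a i)"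
proof
  assume irreducible: "join_irreducible_in (char_subgroups G) (Rdiv a)"
  show "\<exists>!i. nondegenerate_at lam n a i"
  proof (rule ccontr)
    assume "\<not> (\<exists>!i. nondegenerate_at lam n a i)"
    then consider "\<And>j. \<not> nondegenerate_at lam n a j"
      | i j where "nondegenerate_at lam n a i" "nondegenerate_at lam n a j" "i \<noteq> j"
      by blast
    then show False
      using irreducible not_join_irreducible_Rdiv_if_all_degenerate
        not_join_irreducible_Rdiv_if_two_nondegenerate[OF can] by cases blast+
  qed
next
  assume "\<exists>!i. nondegenerate_at lam n a i"
  then obtain i where "nondegenerate_at lam n a i" "\<And>j. nondegenerate_at lam n a j \<Longrightarrow> j = i"
    by blast
  then show "join_irreducible_in (char_subgroups G) (Rdiv a)"
    by (rule join_irreducible_Rdiv_if_unique_nondegenerate[OF can])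
qed

end

theorem mainTheorem15:
  fixes p n :: nat and lam a :: "nat \<Rightarrow> nat"
  assumes "Factorial_Ring.prime p" and "p \<noteq> 2"
    and "n \<ge> 1"
    and "0 < lam 1"
    and "\<forall>i\<in>{1..<n}. lam i < lam (i + 1)"
    and "canonical lam n a"
  shows "join_irreducible_in (char_subgroups (Gp p lam n)) (Rset p lam n a) \<longleftrightarrow>
         (\<exists>!i. nondegenerate_at lam n a i)"
proof -
  interpret odd_prime_power_product n lam p
    using assms(1,2,5) by unfold_locales
  have "\<forall>i\<in>{1..n}. a i \<le> lam i"
    using canonical_le[OF assms(6)] by blast
  then have "Rset p lam n a = Rdiv a"
    by (rule Rset_eq_Rdiv)
  then show ?thesis
    using join_irreducible_Rdiv_iff_unique_nondegenerate[OF assms(6)] by simp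
qed

end
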